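(* Let $\alpha\in(0,1)$, let $X_1,X_2,\dots$ be i.i.d. real random variables with distribution function $F$, and assume $F$ has a unique $\alpha$-quantile $q_\alpha=F^{-1}(\alpha)$. Let $F_k$ be the empirical distribution function of $X_1,\dots,X_k$ and $F_k^{-1}(\alpha):=\inf\{t:F_k(t)\ge\alpha\}$. Put $d(x):=\min\{F(q_\alpha+x)-\alpha,\ \alpha-F(q_\alpha-x)\}$. Then $d(x)>0$ for all $x>0$ and for every $n\in\mathbb N$, $$\mathbb P\Big(\sup_{k\ge n}|F_k^{-1}(\alpha)-q_\alpha|>x\Big)\le 2e^{-2n\,d(x)^2}\qquad\forall x>0.$$
   Context: The $\alpha$-quantiles of $F$ are the points $q$ with $F(q-)\le\alpha\le F(q)$, where $F(q-)$ denotes the left limit of $F$ at $q$. *)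

theory Defs
  imports "HOL-Probability.Probability"
begin

definition left_lim :: "(real \<Rightarrow> real) \<Rightarrow> real \<Rightarrow> real" where
  "left_lim F q = Lim (at_left q) F"

definition is_quantile :: "(real \<Rightarrow> real) \<Rightarrow> real \<Rightarrow> real \<Rightarrow> bool" where
  "is_quantile F \<alpha> q \<longleftrightarrow> left_lim F q \<le> \<alpha> \<and> \<alpha> \<le> F q"

text \<open>Empirical distribution function of the first k observations X 0, ..., X (k-1)
  (the paper's X_1, ..., X_k).\<close>
definition emp_cdf :: "(nat \<Rightarrow> 'a \<Rightarrow> real) \<Rightarrow> nat \<Rightarrow> 'a \<Rightarrow> real \<Rightarrow> real" where
  "emp_cdf X k \<omega> t = real (card {i. i < k \<and> X i \<omega> \<le> t}) / real k"

definition emp_quantile :: "(nat \<Rightarrow> 'a \<Rightarrow> real) \<Rightarrow> nat \<Rightarrow> real \<Rightarrow> 'a \<Rightarrow> real" where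
  "emp_quantile X k \<alpha> \<omega> = Inf {t. emp_cdf X k \<omega> t \<ge> \<alpha>}"

end

theory Submission
  imports Defs
begin

text \<open>
  If \<open>|F\<^sub>k\<^sup>-\<^sup>1(\<alpha>) - q\<^sub>\<alpha>| > x\<close>, then either \<open>F\<^sub>k(q\<^sub>\<alpha> + x) < \<alpha> \<le> F(q\<^sub>\<alpha> + x) - d(x)\<close> or
  \<open>F\<^sub>k(q\<^sub>\<alpha> - x) \<ge> \<alpha> \<ge> F(q\<^sub>\<alpha> - x) + d(x)\<close>, so both tails reduce to deviations of the empirical
  distribution function at a fixed point, i.e. of a sum of i.i.d. indicators. For such sums the
  exponentially tilted and normalised partial products form a nonnegative product martingale;
  Hoeffding's lemma bounds the normalisers, and Ville's maximal inequality
  \<open>P(\<exists>k. M\<^sub>k \<ge> c) \<le> 1/c\<close> controls all \<open>k \<ge> n\<close> at once, giving \<open>exp(-2n d(x)\<^sup>2)\<close> per tail.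
  Positivity of \<open>d(x)\<close> is the uniqueness of the \<open>\<alpha>\<close>-quantile.
\<close>

lemma prod_exp_tilt_lower_bound:
  fixes z m :: "nat \<Rightarrow> real" and l \<mu> :: real
  assumes m_pos: "\<And>i. 0 < m i" and m_le: "\<And>i. m i \<le> exp (l\<^sup>2 / 8)"
  shows "exp (l * (real k * \<mu> - (\<Sum>i<k. z i)) - real k * (l\<^sup>2 / 8))
    \<le> (\<Prod>i<k. exp (l * (\<mu> - z i)) / m i)"
proof -
  have "(\<Prod>i<k. m i) \<le> (\<Prod>i<k. exp (l\<^sup>2 / 8))"
    by (intro prod_mono) (auto simp: m_le less_imp_le[OF m_pos])
  also have "\<dots> = exp (real k * (l\<^sup>2 / 8))"
    by (simp add: exp_of_nat_mult[symmetric])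
  finally have prod_m_le: "(\<Prod>i<k. m i) \<le> exp (real k * (l\<^sup>2 / 8))" .
  have sum_eq: "(\<Sum>i<k. l * (\<mu> - z i)) = l * (real k * \<mu> - (\<Sum>i<k. z i))"
    by (simp add: sum_distrib_left[symmetric] sum_subtractf)
  have "exp (l * (real k * \<mu> - (\<Sum>i<k. z i)) - real k * (l\<^sup>2 / 8))
      = exp (l * (real k * \<mu> - (\<Sum>i<k. z i))) / exp (real k * (l\<^sup>2 / 8))"
    by (rule exp_diff)
  also have "\<dots> \<le> exp (l * (real k * \<mu> - (\<Sum>i<k. z i))) / (\<Prod>i<k. m i)"
  proof (rule divide_left_mono)
    show "0 < exp (real k * (l\<^sup>2 / 8)) * (\<Prod>i<k. m i)"
      by (intro mult_pos_pos exp_gt_zero prod_pos) (simp add: m_pos)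
  qed (fact prod_m_le, simp)
  also have "exp (l * (real k * \<mu> - (\<Sum>i<k. z i))) = (\<Prod>i<k. exp (l * (\<mu> - z i)))"
    by (simp flip: sum_eq exp_sum)
  also have "(\<Prod>i<k. exp (l * (\<mu> - z i))) / (\<Prod>i<k. m i) = (\<Prod>i<k. exp (l * (\<mu> - z i)) / m i)"
    by (rule prod_dividef[symmetric])
  finally show ?thesis .
qed

text \<open>The tilt \<open>4\<delta>\<close> maximises \<open>l\<delta> - l\<^sup>2/8\<close>, the exponent gained per step.\<close>

lemma prod_exp_tilt_ge_if_sum_le:
  fixes z m :: "nat \<Rightarrow> real" and \<mu> \<delta> :: real
  assumes m_pos: "\<And>i. 0 < m i" and m_le: "\<And>i. m i \<le> exp ((4 * \<delta>)\<^sup>2 / 8)"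
    and "0 \<le> \<delta>" and "n \<le> k" and sum_le: "(\<Sum>i<k. z i) \<le> real k * (\<mu> - \<delta>)"
  shows "exp (2 * real n * \<delta>\<^sup>2) \<le> (\<Prod>i<k. exp (4 * \<delta> * (\<mu> - z i)) / m i)"
proof -
  have "real k * \<delta> \<le> real k * \<mu> - (\<Sum>i<k. z i)"
    using sum_le by (simp add: algebra_simps)
  then have gain: "4 * \<delta> * (real k * \<delta>) \<le> 4 * \<delta> * (real k * \<mu> - (\<Sum>i<k. z i))"
    using \<open>0 \<le> \<delta>\<close> by (intro mult_left_mono) auto
  have "2 * real n * \<delta>\<^sup>2 \<le> 2 * real k * \<delta>\<^sup>2"
    using \<open>n \<le> k\<close> by (intro mult_right_mono) auto
  also have "\<dots> = 4 * \<delta> * (real k * \<delta>) - real k * ((4 * \<delta>)\<^sup>2 / 8)"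
    by (simp add: power2_eq_square algebra_simps)
  also have "\<dots> \<le> 4 * \<delta> * (real k * \<mu> - (\<Sum>i<k. z i)) - real k * ((4 * \<delta>)\<^sup>2 / 8)"
    using gain by simp
  finally have "exp (2 * real n * \<delta>\<^sup>2)
      \<le> exp (4 * \<delta> * (real k * \<mu> - (\<Sum>i<k. z i)) - real k * ((4 * \<delta>)\<^sup>2 / 8))"
    by simp
  also have "\<dots> \<le> (\<Prod>i<k. exp (4 * \<delta> * (\<mu> - z i)) / m i)"
    by (rule prod_exp_tilt_lower_bound[OF m_pos m_le])
  finally show ?thesis .
qed

lemma sum_first_passage:
  fixes p :: "nat \<Rightarrow> 'b::linorder"
  shows "(\<Sum>k\<le>N. of_bool (c \<le> p k \<and> (\<forall>j<k. p j < c)) :: real) = of_bool (\<exists>k\<le>N. c \<le> p k)"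
proof (cases "\<exists>k\<le>N. c \<le> p k")
  case True
  define k\<^sub>0 where "k\<^sub>0 = (LEAST k. c \<le> p k)"
  have "c \<le> p k\<^sub>0" unfolding k\<^sub>0_def using True by (auto intro: LeastI)
  have "k\<^sub>0 \<le> N" using True unfolding k\<^sub>0_def by (auto intro: Least_le order.trans)
  have first: "c \<le> p k \<and> (\<forall>j<k. p j < c) \<longleftrightarrow> k = k\<^sub>0" for k
  proof
    assume k: "c \<le> p k \<and> (\<forall>j<k. p j < c)"
    show "k = k\<^sub>0" unfolding k\<^sub>0_def
    proof (rule Least_equality[symmetric])
      show "c \<le> p k" using k by blast
      fix y assume "c \<le> p y"
      then have "\<not> p y < c" by (blast dest: leD)
      then show "k \<le> y" using k by (meson not_le)
    qed
  next
    assume "k = k\<^sub>0"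
    moreover have "p j < c" if "j < k\<^sub>0" for j
      using not_less_Least[of j "\<lambda>k. c \<le> p k"] that unfolding k\<^sub>0_def by (simp add: not_le)
    ultimately show "c \<le> p k \<and> (\<forall>j<k. p j < c)"
      using \<open>c \<le> p k\<^sub>0\<close> by blast
  qed
  show ?thesis using True \<open>k\<^sub>0 \<le> N\<close> by (simp add: first)
next
  case False
  then show ?thesis by (auto intro: sum.neutral)
qed

context prob_space
begin

lemma integral_prod_martingale:
  fixes Y :: "nat \<Rightarrow> 'a \<Rightarrow> real" and g :: "(nat \<Rightarrow> real) \<Rightarrow> real"
  assumes indep: "indep_vars (\<lambda>_. borel) Y UNIV"
    and int: "\<And>i. integrable M (Y i)" and E1: "\<And>i. expectation (Y i) = 1" and "k \<le> N"
    and g[measurable]: "g \<in> borel_measurable (PiM {..<k} (\<lambda>_. borel))"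
    and g_int: "integrable M (\<lambda>\<omega>. (\<Prod>i<k. Y i \<omega>) * g (restrict (\<lambda>i. Y i \<omega>) {..<k}))"
  shows "expectation (\<lambda>\<omega>. (\<Prod>i<N. Y i \<omega>) * g (restrict (\<lambda>i. Y i \<omega>) {..<k}))
    = expectation (\<lambda>\<omega>. (\<Prod>i<k. Y i \<omega>) * g (restrict (\<lambda>i. Y i \<omega>) {..<k}))"
proof -
  define G where "G f = (\<Prod>i<k. f i) * g f" for f :: "nat \<Rightarrow> real"
  define H where "H f = (\<Prod>i\<in>{k..<N}. f i)" for f :: "nat \<Rightarrow> real"
  have "G \<in> borel_measurable (PiM {..<k} (\<lambda>_. borel))" unfolding G_def by measurable
  moreover have "H \<in> borel_measurable (PiM {k..<N} (\<lambda>_. borel))" unfolding H_def by measurable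
  ultimately have "indep_var borel (G \<circ> (\<lambda>\<omega>. restrict (\<lambda>i. Y i \<omega>) {..<k}))
      borel (H \<circ> (\<lambda>\<omega>. restrict (\<lambda>i. Y i \<omega>) {k..<N}))"
    by (intro indep_var_compose[OF indep_var_restrict[OF indep]]) auto
  then have indep': "indep_var borel (\<lambda>\<omega>. (\<Prod>i<k. Y i \<omega>) * g (restrict (\<lambda>i. Y i \<omega>) {..<k}))
      borel (\<lambda>\<omega>. \<Prod>i\<in>{k..<N}. Y i \<omega>)"
    by (simp add: o_def G_def H_def)
  have tail_int: "integrable M (\<lambda>\<omega>. \<Prod>i\<in>{k..<N}. Y i \<omega>)"
    by (rule indep_vars_integrable) (auto intro: indep_vars_subset[OF indep] int)
  have tail_E: "expectation (\<lambda>\<omega>. \<Prod>i\<in>{k..<N}. Y i \<omega>) = 1"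
    by (subst indep_vars_lebesgue_integral) (auto intro: indep_vars_subset[OF indep] int simp: E1)
  have split: "(\<Prod>i<k. Y i \<omega>) * (\<Prod>i\<in>{k..<N}. Y i \<omega>) = (\<Prod>i<N. Y i \<omega>)" for \<omega>
    using \<open>k \<le> N\<close> by (metis prod.atLeastLessThan_concat lessThan_atLeast0 zero_le)
  have "expectation (\<lambda>\<omega>. (\<Prod>i<N. Y i \<omega>) * g (restrict (\<lambda>i. Y i \<omega>) {..<k}))
      = expectation (\<lambda>\<omega>. ((\<Prod>i<k. Y i \<omega>) * g (restrict (\<lambda>i. Y i \<omega>) {..<k})) * (\<Prod>i\<in>{k..<N}. Y i \<omega>))"
    by (intro Bochner_Integration.integral_cong refl) (simp add: split[symmetric] mult_ac)
  also have "\<dots> = expectation (\<lambda>\<omega>. (\<Prod>i<k. Y i \<omega>) * g (restrict (\<lambda>i. Y i \<omega>) {..<k}))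
      * expectation (\<lambda>\<omega>. \<Prod>i\<in>{k..<N}. Y i \<omega>)"
    by (rule indep_var_lebesgue_integral[OF indep' g_int tail_int])
  finally show ?thesis by (simp add: tail_E)
qed

lemma integral_prod_first_passage:
  fixes Y :: "nat \<Rightarrow> 'a \<Rightarrow> real" and c :: real
  assumes indep: "indep_vars (\<lambda>_. borel) Y UNIV"
    and int: "\<And>i. integrable M (Y i)" and E1: "\<And>i. expectation (Y i) = 1" and "k \<le> N"
  defines "E \<equiv> {\<omega>\<in>space M. c \<le> (\<Prod>i<k. Y i \<omega>) \<and> (\<forall>j<k. (\<Prod>i<j. Y i \<omega>) < c)}"
  shows "expectation (\<lambda>\<omega>. (\<Prod>i<N. Y i \<omega>) * indicator E \<omega>)
    = expectation (\<lambda>\<omega>. (\<Prod>i<k. Y i \<omega>) * indicator E \<omega>)"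
proof -
  have [measurable]: "\<And>i. Y i \<in> borel_measurable M"
    using indep by (auto simp: indep_vars_def)
  define g :: "(nat \<Rightarrow> real) \<Rightarrow> real"
    where "g f = of_bool (c \<le> (\<Prod>i<k. f i) \<and> (\<forall>j<k. (\<Prod>i<j. f i) < c))" for f
  have g_E: "g (restrict (\<lambda>i. Y i \<omega>) {..<k}) = indicator E \<omega>" if "\<omega> \<in> space M" for \<omega>
    using that by (auto simp: g_def E_def)
  have "expectation (\<lambda>\<omega>. (\<Prod>i<N. Y i \<omega>) * indicator E \<omega>)
      = expectation (\<lambda>\<omega>. (\<Prod>i<N. Y i \<omega>) * g (restrict (\<lambda>i. Y i \<omega>) {..<k}))"
    by (intro Bochner_Integration.integral_cong refl) (simp add: g_E)
  also have "\<dots> = expectation (\<lambda>\<omega>. (\<Prod>i<k. Y i \<omega>) * g (restrict (\<lambda>i. Y i \<omega>) {..<k}))"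
  proof (rule integral_prod_martingale[OF indep int E1 \<open>k \<le> N\<close>])
    show "g \<in> borel_measurable (PiM {..<k} (\<lambda>_. borel))" unfolding g_def by measurable
    have "integrable M (\<lambda>\<omega>. (\<Prod>i<k. Y i \<omega>) * indicator E \<omega>)"
      unfolding E_def
      by (intro integrable_real_mult_indicator indep_vars_integrable)
        (auto intro: indep_vars_subset[OF indep] int)
    then show "integrable M (\<lambda>\<omega>. (\<Prod>i<k. Y i \<omega>) * g (restrict (\<lambda>i. Y i \<omega>) {..<k}))"
      by (rule Bochner_Integration.integrable_cong[THEN iffD1, OF refl, rotated]) (simp add: g_E)
  qed
  also have "\<dots> = expectation (\<lambda>\<omega>. (\<Prod>i<k. Y i \<omega>) * indicator E \<omega>)"
    by (intro Bochner_Integration.integral_cong refl) (simp add: g_E)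
  finally show ?thesis .
qed

lemma ville_finite_horizon:
  fixes Y :: "nat \<Rightarrow> 'a \<Rightarrow> real" and c :: real
  assumes indep: "indep_vars (\<lambda>_. borel) Y UNIV"
    and nonneg: "\<And>i \<omega>. 0 \<le> Y i \<omega>" and int: "\<And>i. integrable M (Y i)"
    and E1: "\<And>i. expectation (Y i) = 1" and "c > 0"
  shows "prob {\<omega>\<in>space M. \<exists>k\<le>N. c \<le> (\<Prod>i<k. Y i \<omega>)} \<le> 1 / c"
proof -
  have [measurable]: "\<And>i. Y i \<in> borel_measurable M"
    using indep by (auto simp: indep_vars_def)
  define P where "P k \<omega> = (\<Prod>i<k. Y i \<omega>)" for k \<omega>
  \<comment> \<open>optional stopping at the first time the products reach \<open>c\<close>\<close>
  define E where "E k = {\<omega>\<in>space M. c \<le> P k \<omega> \<and> (\<forall>j<k. P j \<omega> < c)}" for k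
  define U where "U = {\<omega>\<in>space M. \<exists>k\<le>N. c \<le> P k \<omega>}"
  have E_sets[measurable]: "E k \<in> sets M" and [measurable]: "U \<in> sets M" for k
    unfolding E_def U_def P_def by measurable
  have P_int: "integrable M (P k)" for k
    unfolding P_def by (rule indep_vars_integrable) (auto intro: indep_vars_subset[OF indep] int)
  have "expectation (P N) = 1"
    unfolding P_def
    by (subst indep_vars_lebesgue_integral) (auto intro: indep_vars_subset[OF indep] int simp: E1)
  have stopped: "expectation (\<lambda>\<omega>. P N \<omega> * indicator (E k) \<omega>)
      = expectation (\<lambda>\<omega>. P k \<omega> * indicator (E k) \<omega>)" if "k \<le> N" for k
    unfolding P_def E_def by (rule integral_prod_first_passage[OF indep int E1 that])
  have U_split: "indicator U \<omega> = (\<Sum>k\<le>N. indicator (E k) \<omega> :: real)" if "\<omega> \<in> space M" for \<omega>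
    using sum_first_passage[where N=N and c=c and p="\<lambda>k. P k \<omega>"] that by (simp add: U_def E_def indicator_def of_bool_def)
  have "prob U = expectation (\<lambda>\<omega>. \<Sum>k\<le>N. indicator (E k) \<omega>)"
    by (simp add: U_split[symmetric] cong: Bochner_Integration.integral_cong)
  then have "c * prob U = (\<Sum>k\<le>N. expectation (\<lambda>\<omega>. c * indicator (E k) \<omega>))"
    by (subst (asm) Bochner_Integration.integral_sum)
      (auto intro: integrable_real_indicator simp: sum_distrib_left less_top[symmetric])
  also have "\<dots> \<le> (\<Sum>k\<le>N. expectation (\<lambda>\<omega>. P k \<omega> * indicator (E k) \<omega>))"
  proof (intro sum_mono integral_mono integrable_real_mult_indicator P_int E_sets)
    show "c * indicator (E k) \<omega> \<le> P k \<omega> * indicator (E k) \<omega>" for k \<omega>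
      by (auto simp: E_def indicator_def)
  qed (auto intro: integrable_real_indicator simp: E_sets less_top[symmetric])
  also have "\<dots> = (\<Sum>k\<le>N. expectation (\<lambda>\<omega>. P N \<omega> * indicator (E k) \<omega>))"
    by (intro sum.cong refl stopped[symmetric]) simp
  also have "\<dots> = expectation (\<lambda>\<omega>. \<Sum>k\<le>N. P N \<omega> * indicator (E k) \<omega>)"
    by (rule Bochner_Integration.integral_sum[symmetric])
      (auto intro: integrable_real_mult_indicator P_int)
  also have "\<dots> = expectation (\<lambda>\<omega>. P N \<omega> * indicator U \<omega>)"
    by (intro Bochner_Integration.integral_cong refl) (simp add: U_split sum_distrib_left)
  also have "\<dots> \<le> expectation (P N)"
    by (intro integral_mono integrable_real_mult_indicator P_int)
      (auto simp: indicator_def P_def nonneg prod_nonneg)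
  finally show ?thesis
    using \<open>expectation (P N) = 1\<close> \<open>c > 0\<close> by (simp add: U_def P_def field_simps)
qed

lemma ville_inequality:
  fixes Y :: "nat \<Rightarrow> 'a \<Rightarrow> real" and c :: real
  assumes "indep_vars (\<lambda>_. borel) Y UNIV"
    and "\<And>i \<omega>. 0 \<le> Y i \<omega>" and "\<And>i. integrable M (Y i)"
    and "\<And>i. expectation (Y i) = 1" and "c > 0"
  shows "prob {\<omega>\<in>space M. \<exists>k. c \<le> (\<Prod>i<k. Y i \<omega>)} \<le> 1 / c"
proof -
  have [measurable]: "\<And>i. Y i \<in> borel_measurable M"
    using assms(1) by (auto simp: indep_vars_def)
  define A where "A N = {\<omega>\<in>space M. \<exists>k\<le>N. c \<le> (\<Prod>i<k. Y i \<omega>)}" for N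
  have "(\<lambda>N. prob (A N)) \<longlonglongrightarrow> prob (\<Union>N. A N)"
    by (rule finite_Lim_measure_incseq) (auto simp: A_def incseq_def intro: order_trans)
  moreover have "(\<Union>N. A N) = {\<omega>\<in>space M. \<exists>k. c \<le> (\<Prod>i<k. Y i \<omega>)}"
    unfolding A_def by auto
  moreover have "prob (A N) \<le> 1 / c" for N
    unfolding A_def by (rule ville_finite_horizon[OF assms])
  ultimately show ?thesis by (metis LIMSEQ_le_const2)
qed

lemma Hoeffdings_lemma_unit_interval:
  fixes Z :: "'a \<Rightarrow> real"
  assumes [measurable]: "Z \<in> borel_measurable M" and Z01: "\<And>\<omega>. Z \<omega> \<in> {0..1}" and "l > 0"
  shows "expectation (\<lambda>\<omega>. exp (l * (expectation Z - Z \<omega>))) \<le> exp (l\<^sup>2 / 8)"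
proof -
  have Z0: "0 \<le> Z \<omega>" and Z1: "Z \<omega> \<le> 1" for \<omega>
    using Z01[of \<omega>] by simp_all
  interpret interval_bounded_random_variable M "\<lambda>\<omega>. - Z \<omega>" "-1" 0
  proof
    show "AE \<omega> in M. - Z \<omega> \<in> {- 1..0}" by (simp add: Z0 Z1)
  qed measurable
  have "integrable M Z"
  proof (rule integrable_const_bound[where B=1])
    show "AE \<omega> in M. norm (Z \<omega>) \<le> 1" by (simp add: Z0 Z1)
  qed measurable
  then have EZ: "expectation Z \<le> 1"
    by (rule integral_le_const) (simp add: Z1)
  have "integrable M (\<lambda>\<omega>. exp (l * (expectation Z - Z \<omega>)))"
  proof (rule integrable_const_bound[where B="exp l"])
    show "AE \<omega> in M. norm (exp (l * (expectation Z - Z \<omega>))) \<le> exp l"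
    proof (rule AE_I2)
      fix \<omega>
      have "expectation Z - Z \<omega> \<le> 1" using EZ Z0[of \<omega>] by simp
      then have "l * (expectation Z - Z \<omega>) \<le> l" using \<open>l > 0\<close> by (simp add: mult_left_le)
      then show "norm (exp (l * (expectation Z - Z \<omega>))) \<le> exp l" by simp
    qed
  qed measurable
  then have "ennreal (expectation (\<lambda>\<omega>. exp (l * (expectation Z - Z \<omega>))))
      = (\<integral>\<^sup>+ \<omega>. ennreal (exp (l * (expectation Z - Z \<omega>))) \<partial>M)"
    by (simp add: nn_integral_eq_integral)
  also have "(\<lambda>\<omega>. l * (expectation Z - Z \<omega>)) = (\<lambda>\<omega>. l * (- Z \<omega> - expectation (\<lambda>\<omega>. - Z \<omega>)))"
    by simp
  also have "(\<integral>\<^sup>+ \<omega>. ennreal (exp (l * (- Z \<omega> - expectation (\<lambda>\<omega>. - Z \<omega>)))) \<partial>M)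
      \<le> ennreal (exp (l\<^sup>2 * (0 - (- 1))\<^sup>2 / 8))"
    by (rule Hoeffdings_lemma_nn_integral[OF \<open>l > 0\<close>])
  finally show ?thesis by (simp add: ennreal_le_iff)
qed

lemma maximal_Hoeffding_lower_tail:
  fixes Z :: "nat \<Rightarrow> 'a \<Rightarrow> real" and \<mu> \<delta> :: real
  assumes indep: "indep_vars (\<lambda>_. borel) Z UNIV" and Z01: "\<And>i \<omega>. Z i \<omega> \<in> {0..1}"
    and EZ: "\<And>i. expectation (Z i) = \<mu>" and "\<delta> > 0"
  shows "prob {\<omega>\<in>space M. \<exists>k\<ge>n. (\<Sum>i<k. Z i \<omega>) \<le> real k * (\<mu> - \<delta>)} \<le> exp (- 2 * real n * \<delta>\<^sup>2)"
proof -
  have [measurable]: "\<And>i. Z i \<in> borel_measurable M"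
    using indep by (auto simp: indep_vars_def)
  define m where "m i = expectation (\<lambda>\<omega>. exp (4 * \<delta> * (\<mu> - Z i \<omega>)))" for i
  define Y where "Y i \<omega> = exp (4 * \<delta> * (\<mu> - Z i \<omega>)) / m i" for i \<omega>
  define c where "c = exp (2 * real n * \<delta>\<^sup>2)"
  have int: "integrable M (\<lambda>\<omega>. exp (4 * \<delta> * (\<mu> - Z i \<omega>)))" for i
  proof (rule integrable_const_bound[where B="exp (4 * \<delta> * \<mu>)"])
    show "AE \<omega> in M. norm (exp (4 * \<delta> * (\<mu> - Z i \<omega>))) \<le> exp (4 * \<delta> * \<mu>)"
      using Z01 \<open>\<delta> > 0\<close> by (auto intro!: mult_left_mono)
  qed measurable
  have m_pos: "0 < m i" for i
  proof -
    have "exp (4 * \<delta> * (\<mu> - 1)) \<le> m i"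
      unfolding m_def using Z01 \<open>\<delta> > 0\<close> by (intro integral_ge_const int) (auto intro!: mult_left_mono)
    then show ?thesis by (meson exp_gt_zero less_le_trans)
  qed
  have m_le: "m i \<le> exp ((4 * \<delta>)\<^sup>2 / 8)" for i
    using Hoeffdings_lemma_unit_interval[of "Z i" "4 * \<delta>"] Z01 \<open>\<delta> > 0\<close> by (simp add: m_def EZ)
  have indep_Y: "indep_vars (\<lambda>_. borel) Y UNIV"
    unfolding Y_def by (rule indep_vars_compose2[OF indep]) measurable
  have Y_nonneg: "0 \<le> Y i \<omega>" and Y_int: "integrable M (Y i)" and EY: "expectation (Y i) = 1" for i \<omega>
    using m_pos[of i] int[of i] by (simp_all add: Y_def[abs_def] m_def)
  have "{\<omega>\<in>space M. \<exists>k\<ge>n. (\<Sum>i<k. Z i \<omega>) \<le> real k * (\<mu> - \<delta>)}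
      \<subseteq> {\<omega>\<in>space M. \<exists>k. c \<le> (\<Prod>i<k. Y i \<omega>)}"
  proof safe
    fix \<omega> k assume "\<omega> \<in> space M" "n \<le> k" "(\<Sum>i<k. Z i \<omega>) \<le> real k * (\<mu> - \<delta>)"
    then have "c \<le> (\<Prod>i<k. Y i \<omega>)"
      unfolding c_def Y_def using \<open>\<delta> > 0\<close> by (intro prod_exp_tilt_ge_if_sum_le m_pos m_le) auto
    then show "\<exists>k. c \<le> (\<Prod>i<k. Y i \<omega>)" ..
  qed
  then have "prob {\<omega>\<in>space M. \<exists>k\<ge>n. (\<Sum>i<k. Z i \<omega>) \<le> real k * (\<mu> - \<delta>)}
      \<le> prob {\<omega>\<in>space M. \<exists>k. c \<le> (\<Prod>i<k. Y i \<omega>)}"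
    by (rule finite_measure_mono) (simp add: Y_def)
  also have "\<dots> \<le> 1 / c"
    by (rule ville_inequality[OF indep_Y Y_nonneg Y_int EY]) (simp add: c_def)
  finally show ?thesis
    by (simp add: c_def exp_minus field_simps)
qed

end

lemma emp_cdf_eq_average: "emp_cdf X k \<omega> t = (\<Sum>i<k. of_bool (X i \<omega> \<le> t)) / real k"
proof -
  have "{..<k} \<inter> {i. X i \<omega> \<le> t} = {i. i < k \<and> X i \<omega> \<le> t}" by auto
  then show ?thesis by (simp add: emp_cdf_def)
qed

lemma of_nat_mult_emp_cdf: "real k * emp_cdf X k \<omega> t = (\<Sum>i<k. of_bool (X i \<omega> \<le> t))"
  by (cases "k = 0") (simp_all add: emp_cdf_eq_average)

lemma measurable_emp_cdf [measurable]:
  assumes [measurable]: "\<And>i. X i \<in> borel_measurable M"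
  shows "(\<lambda>\<omega>. emp_cdf X k \<omega> t) \<in> borel_measurable M"
  unfolding emp_cdf_eq_average by measurable

lemma emp_quantile_le:
  assumes "0 < \<alpha>" and "\<alpha> \<le> emp_cdf X k \<omega> s"
  shows "emp_quantile X k \<alpha> \<omega> \<le> s"
  unfolding emp_quantile_def
proof (rule cInf_lower)
  show "s \<in> {t. \<alpha> \<le> emp_cdf X k \<omega> t}" using assms(2) by simp
  show "bdd_below {t. \<alpha> \<le> emp_cdf X k \<omega> t}"
  proof (rule bdd_belowI)
    fix t assume "t \<in> {t. \<alpha> \<le> emp_cdf X k \<omega> t}"
    then have "card {i. i < k \<and> X i \<omega> \<le> t} \<noteq> 0"
      using \<open>0 < \<alpha>\<close> by (intro notI) (simp add: emp_cdf_def)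
    then have "{i. i < k \<and> X i \<omega> \<le> t} \<noteq> {}" by (metis card.empty)
    then obtain i where "i < k" "X i \<omega> \<le> t" by blast
    moreover have "Min ((\<lambda>i. X i \<omega>) ` {..<k}) \<le> X i \<omega>"
      using \<open>i < k\<close> by (intro Min_le) auto
    ultimately show "Min ((\<lambda>i. X i \<omega>) ` {..<k}) \<le> t" by linarith
  qed
qed

lemma emp_cdf_mono: "s \<le> t \<Longrightarrow> emp_cdf X k \<omega> s \<le> emp_cdf X k \<omega> t"
  unfolding emp_cdf_def by (intro divide_right_mono of_nat_mono card_mono) auto

lemma emp_cdf_ge_if_emp_quantile_less:
  assumes "0 < k" and "\<alpha> \<le> 1" and "emp_quantile X k \<alpha> \<omega> < s"
  shows "\<alpha> \<le> emp_cdf X k \<omega> s"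
proof -
  let ?t = "Max ((\<lambda>i. X i \<omega>) ` {..<k})"
  have "{i. i < k \<and> X i \<omega> \<le> ?t} = {..<k}" by (auto intro: Max_ge)
  then have "?t \<in> {t. \<alpha> \<le> emp_cdf X k \<omega> t}"
    using assms(1,2) by (simp add: emp_cdf_def)
  then obtain t where "\<alpha> \<le> emp_cdf X k \<omega> t" "t < s"
    using cInf_lessD[of "{t. \<alpha> \<le> emp_cdf X k \<omega> t}"] assms(3) unfolding emp_quantile_def by blast
  then show ?thesis using emp_cdf_mono[of t s X k \<omega>] by simp
qed

lemma emp_quantile_far_cases:
  assumes "0 < k" and "0 < \<alpha>" "\<alpha> \<le> 1" and "x < \<bar>emp_quantile X k \<alpha> \<omega> - q\<bar>"
  shows "emp_cdf X k \<omega> (q + x) < \<alpha> \<or> \<alpha> \<le> emp_cdf X k \<omega> (q - x)"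
proof (cases "q + x < emp_quantile X k \<alpha> \<omega>")
  case True
  then show ?thesis using emp_quantile_le[OF \<open>0 < \<alpha>\<close>, of X k \<omega> "q + x"] by linarith
next
  case False
  then have "emp_quantile X k \<alpha> \<omega> < q - x" using assms(4) by linarith
  then have "\<alpha> \<le> emp_cdf X k \<omega> (q - x)"
    by (rule emp_cdf_ge_if_emp_quantile_less[OF \<open>0 < k\<close> \<open>\<alpha> \<le> 1\<close>])
  then show ?thesis by (rule disjI2)
qed

lemma sup_emp_quantile_deviation_subset:
  fixes X :: "nat \<Rightarrow> 'a \<Rightarrow> real" and F :: "real \<Rightarrow> real"
  assumes "1 \<le> n" and "0 < \<alpha>" "\<alpha> \<le> 1"
    and "\<delta> \<le> F (q + x) - \<alpha>" and "\<delta> \<le> \<alpha> - F (q - x)"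
  shows "{\<omega>\<in>S. ereal x < (SUP k\<in>{n..}. ereal \<bar>emp_quantile X k \<alpha> \<omega> - q\<bar>)}
    \<subseteq> {\<omega>\<in>S. \<exists>k\<ge>n. emp_cdf X k \<omega> (q + x) \<le> F (q + x) - \<delta>}
      \<union> {\<omega>\<in>S. \<exists>k\<ge>n. F (q - x) + \<delta> \<le> emp_cdf X k \<omega> (q - x)}"
proof safe
  fix \<omega> assume "\<omega> \<in> S" "ereal x < (SUP k\<in>{n..}. ereal \<bar>emp_quantile X k \<alpha> \<omega> - q\<bar>)"
    and not_upper: "\<not> (\<exists>k\<ge>n. F (q - x) + \<delta> \<le> emp_cdf X k \<omega> (q - x))"
  then obtain k where "n \<le> k" and "x < \<bar>emp_quantile X k \<alpha> \<omega> - q\<bar>"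
    by (auto simp: less_SUP_iff)
  moreover have "0 < k" using \<open>n \<le> k\<close> \<open>1 \<le> n\<close> by simp
  ultimately have "emp_cdf X k \<omega> (q + x) < \<alpha> \<or> \<alpha> \<le> emp_cdf X k \<omega> (q - x)"
    by (intro emp_quantile_far_cases[OF _ \<open>0 < \<alpha>\<close> \<open>\<alpha> \<le> 1\<close>])
  moreover have "\<not> \<alpha> \<le> emp_cdf X k \<omega> (q - x)"
  proof
    assume "\<alpha> \<le> emp_cdf X k \<omega> (q - x)"
    then have "F (q - x) + \<delta> \<le> emp_cdf X k \<omega> (q - x)" using assms(5) by linarith
    then show False using not_upper \<open>n \<le> k\<close> by blast
  qed
  ultimately show "\<exists>k\<ge>n. emp_cdf X k \<omega> (q + x) \<le> F (q + x) - \<delta>"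
    using \<open>n \<le> k\<close> assms(4) by (intro exI[of _ k]) auto
qed

context prob_space
begin

lemma integrable_of_bool_le:
  fixes Z :: "'a \<Rightarrow> real"
  assumes [measurable]: "Z \<in> borel_measurable M"
  shows "integrable M (\<lambda>\<omega>. of_bool (Z \<omega> \<le> t) :: real)"
proof (rule integrable_const_bound[where B=1])
  show "AE \<omega> in M. norm (of_bool (Z \<omega> \<le> t) :: real) \<le> 1" by simp
qed measurable

lemma expectation_of_bool_le:
  fixes Z :: "'a \<Rightarrow> real"
  assumes [measurable]: "Z \<in> borel_measurable M"
  shows "expectation (\<lambda>\<omega>. of_bool (Z \<omega> \<le> t)) = prob {\<omega>\<in>space M. Z \<omega> \<le> t}"
proof -
  have "expectation (\<lambda>\<omega>. of_bool (Z \<omega> \<le> t)) = expectation (indicator {\<omega>\<in>space M. Z \<omega> \<le> t})"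
    by (intro Bochner_Integration.integral_cong) (auto simp: indicator_def)
  also have "\<dots> = prob ({\<omega>\<in>space M. Z \<omega> \<le> t} \<inter> space M)"
    by (rule Bochner_Integration.integral_indicator)
  finally show ?thesis by (simp add: Int_absorb2)
qed

lemma maximal_emp_cdf_lower_deviation:
  fixes X :: "nat \<Rightarrow> 'a \<Rightarrow> real"
  assumes indep: "indep_vars (\<lambda>_. borel) X UNIV"
    and p: "\<And>i. prob {\<omega>\<in>space M. X i \<omega> \<le> t} = p" and "\<delta> > 0"
  shows "prob {\<omega>\<in>space M. \<exists>k\<ge>n. emp_cdf X k \<omega> t \<le> p - \<delta>} \<le> exp (- 2 * real n * \<delta>\<^sup>2)"
proof -
  have [measurable]: "\<And>i. X i \<in> borel_measurable M"
    using indep by (auto simp: indep_vars_def)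
  let ?Z = "\<lambda>i \<omega>. of_bool (X i \<omega> \<le> t) :: real"
  have "{\<omega>\<in>space M. \<exists>k\<ge>n. emp_cdf X k \<omega> t \<le> p - \<delta>}
      \<subseteq> {\<omega>\<in>space M. \<exists>k\<ge>n. (\<Sum>i<k. ?Z i \<omega>) \<le> real k * (p - \<delta>)}"
  proof safe
    fix \<omega> k assume "\<omega> \<in> space M" "n \<le> k" "emp_cdf X k \<omega> t \<le> p - \<delta>"
    then have "real k * emp_cdf X k \<omega> t \<le> real k * (p - \<delta>)" by (intro mult_left_mono) auto
    then show "\<exists>k'\<ge>n. (\<Sum>i<k'. ?Z i \<omega>) \<le> real k' * (p - \<delta>)"
      using \<open>n \<le> k\<close> by (auto simp: of_nat_mult_emp_cdf)
  qed
  then have "prob {\<omega>\<in>space M. \<exists>k\<ge>n. emp_cdf X k \<omega> t \<le> p - \<delta>}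
      \<le> prob {\<omega>\<in>space M. \<exists>k\<ge>n. (\<Sum>i<k. ?Z i \<omega>) \<le> real k * (p - \<delta>)}"
    by (rule finite_measure_mono) measurable
  also have "\<dots> \<le> exp (- 2 * real n * \<delta>\<^sup>2)"
  proof (rule maximal_Hoeffding_lower_tail[OF _ _ _ \<open>\<delta> > 0\<close>])
    show "indep_vars (\<lambda>_. borel) ?Z UNIV"
      by (rule indep_vars_compose2[OF indep]) measurable
  qed (simp_all add: expectation_of_bool_le p)
  finally show ?thesis .
qed

lemma maximal_emp_cdf_upper_deviation:
  fixes X :: "nat \<Rightarrow> 'a \<Rightarrow> real"
  assumes indep: "indep_vars (\<lambda>_. borel) X UNIV"
    and p: "\<And>i. prob {\<omega>\<in>space M. X i \<omega> \<le> t} = p" and "\<delta> > 0"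
  shows "prob {\<omega>\<in>space M. \<exists>k\<ge>n. p + \<delta> \<le> emp_cdf X k \<omega> t} \<le> exp (- 2 * real n * \<delta>\<^sup>2)"
proof -
  have [measurable]: "\<And>i. X i \<in> borel_measurable M"
    using indep by (auto simp: indep_vars_def)
  let ?Z = "\<lambda>i \<omega>. 1 - of_bool (X i \<omega> \<le> t) :: real"
  have "{\<omega>\<in>space M. \<exists>k\<ge>n. p + \<delta> \<le> emp_cdf X k \<omega> t}
      \<subseteq> {\<omega>\<in>space M. \<exists>k\<ge>n. (\<Sum>i<k. ?Z i \<omega>) \<le> real k * ((1 - p) - \<delta>)}"
  proof safe
    fix \<omega> k assume "\<omega> \<in> space M" "n \<le> k" "p + \<delta> \<le> emp_cdf X k \<omega> t"
    then have "real k * (p + \<delta>) \<le> real k * emp_cdf X k \<omega> t" by (intro mult_left_mono) auto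
    then show "\<exists>k'\<ge>n. (\<Sum>i<k'. ?Z i \<omega>) \<le> real k' * ((1 - p) - \<delta>)"
      using \<open>n \<le> k\<close> by (auto simp: sum_subtractf of_nat_mult_emp_cdf algebra_simps)
  qed
  then have "prob {\<omega>\<in>space M. \<exists>k\<ge>n. p + \<delta> \<le> emp_cdf X k \<omega> t}
      \<le> prob {\<omega>\<in>space M. \<exists>k\<ge>n. (\<Sum>i<k. ?Z i \<omega>) \<le> real k * ((1 - p) - \<delta>)}"
    by (rule finite_measure_mono) measurable
  also have "\<dots> \<le> exp (- 2 * real n * \<delta>\<^sup>2)"
  proof (rule maximal_Hoeffding_lower_tail[OF _ _ _ \<open>\<delta> > 0\<close>])
    show "indep_vars (\<lambda>_. borel) ?Z UNIV"
      by (rule indep_vars_compose2[OF indep]) measurable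
    show "expectation (?Z i) = 1 - p" for i
      by (subst Bochner_Integration.integral_diff)
        (auto simp: integrable_of_bool_le expectation_of_bool_le p prob_space)
  qed simp
  finally show ?thesis .
qed

lemma prob_sup_emp_quantile_deviation:
  fixes X :: "nat \<Rightarrow> 'a \<Rightarrow> real" and F :: "real \<Rightarrow> real"
  assumes indep: "indep_vars (\<lambda>_. borel) X UNIV"
    and F: "\<And>i t. prob {\<omega>\<in>space M. X i \<omega> \<le> t} = F t"
    and "1 \<le> n" and "0 < \<alpha>" "\<alpha> \<le> 1" and "0 < \<delta>"
    and "\<delta> \<le> F (q + x) - \<alpha>" and "\<delta> \<le> \<alpha> - F (q - x)"
  shows "prob {\<omega>\<in>space M. ereal x < (SUP k\<in>{n..}. ereal \<bar>emp_quantile X k \<alpha> \<omega> - q\<bar>)}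
    \<le> 2 * exp (- 2 * real n * \<delta>\<^sup>2)"
proof -
  have [measurable]: "\<And>i. X i \<in> borel_measurable M"
    using indep by (auto simp: indep_vars_def)
  let ?L = "{\<omega>\<in>space M. \<exists>k\<ge>n. emp_cdf X k \<omega> (q + x) \<le> F (q + x) - \<delta>}"
  let ?U = "{\<omega>\<in>space M. \<exists>k\<ge>n. F (q - x) + \<delta> \<le> emp_cdf X k \<omega> (q - x)}"
  have "prob {\<omega>\<in>space M. ereal x < (SUP k\<in>{n..}. ereal \<bar>emp_quantile X k \<alpha> \<omega> - q\<bar>)}
      \<le> prob (?L \<union> ?U)"
    by (rule finite_measure_mono[OF sup_emp_quantile_deviation_subset]) (use assms in auto)
  also have "\<dots> \<le> prob ?L + prob ?U"
    by (rule measure_Un_le) measurable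
  also have "\<dots> \<le> 2 * exp (- 2 * real n * \<delta>\<^sup>2)"
    using maximal_emp_cdf_lower_deviation[where t="q + x" and n=n, OF indep F \<open>0 < \<delta>\<close>]
      maximal_emp_cdf_upper_deviation[where t="q - x" and n=n, OF indep F \<open>0 < \<delta>\<close>]
    by linarith
  finally show ?thesis .
qed

lemma cdf_distr_eq:
  assumes "X \<in> borel_measurable M"
  shows "cdf (distr M borel X) t = prob {\<omega>\<in>space M. X \<omega> \<le> t}"
  using assms by (simp add: cdf_def measure_distr vimage_def Int_def conj_commute)

end

lemma left_lim_cdf:
  assumes "real_distribution D"
  shows "left_lim (cdf D) q = measure D {..<q}"
proof -
  interpret real_distribution D by fact
  show ?thesis unfolding left_lim_def
    by (intro tendsto_Lim cdf_at_left) simp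
qed

lemma bdd_below_cdf_ge:
  assumes "real_distribution D" and "0 < \<alpha>"
  shows "bdd_below {t. \<alpha> \<le> cdf D t}"
proof -
  interpret real_distribution D by fact
  obtain L where L: "\<And>t. t \<le> L \<Longrightarrow> cdf D t < \<alpha>"
    using order_tendstoD(2)[OF cdf_lim_at_bot \<open>0 < \<alpha>\<close>] by (auto simp: eventually_at_bot_linorder)
  have "L \<le> t" if "\<alpha> \<le> cdf D t" for t
  proof (rule ccontr)
    assume "\<not> L \<le> t"
    then have "cdf D t < \<alpha>" by (intro L) simp
    with that show False by simp
  qed
  then show ?thesis by (intro bdd_belowI[where m=L]) simp
qed

lemma is_quantile_cdf_Inf:
  assumes D: "real_distribution D" and "0 < \<alpha>" "\<alpha> < 1"
  shows "is_quantile (cdf D) \<alpha> (Inf {t. \<alpha> \<le> cdf D t})"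
proof -
  interpret real_distribution D by fact
  define S where "S = {t. \<alpha> \<le> cdf D t}"
  define q where "q = Inf S"
  obtain T where "\<And>t. T \<le> t \<Longrightarrow> \<alpha> < cdf D t"
    using order_tendstoD(1)[OF cdf_lim_at_top_prob \<open>\<alpha> < 1\<close>] by (auto simp: eventually_at_top_linorder)
  then have "T \<in> S" by (simp add: S_def less_imp_le)
  then have "S \<noteq> {}" by blast
  have bdd: "bdd_below S" unfolding S_def by (rule bdd_below_cdf_ge[OF D \<open>0 < \<alpha>\<close>])
  have "\<alpha> \<le> cdf D q"
  proof -
    have "(cdf D \<longlongrightarrow> cdf D q) (at_right q)"
      using cdf_is_right_cont unfolding continuous_within by simp
    moreover have "eventually (\<lambda>t. \<alpha> \<le> cdf D t) (at_right q)"
    proof (rule eventually_at_rightI[where b="q + 1"])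
      fix t assume "t \<in> {q<..<q + 1}"
      then have "Inf S < t" by (simp add: q_def)
      then obtain s where "s \<in> S" "s < t" using cInf_lessD[of S t] \<open>S \<noteq> {}\<close> by blast
      then show "\<alpha> \<le> cdf D t" using cdf_nondecreasing[of s t] by (simp add: S_def)
    qed simp
    ultimately show ?thesis by (intro tendsto_lowerbound) auto
  qed
  moreover have "measure D {..<q} \<le> \<alpha>"
  proof -
    have "eventually (\<lambda>t. cdf D t \<le> \<alpha>) (at_left q)"
    proof (rule eventually_at_leftI[where a="q - 1"])
      fix t assume "t \<in> {q - 1<..<q}"
      have "t \<notin> S"
      proof
        assume "t \<in> S"
        then have "q \<le> t" unfolding q_def by (rule cInf_lower[OF _ bdd])
        with \<open>t \<in> {q - 1<..<q}\<close> show False by simp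
      qed
      then show "cdf D t \<le> \<alpha>" by (simp add: S_def)
    qed simp
    with cdf_at_left show ?thesis by (intro tendsto_upperbound) auto
  qed
  moreover have "Inf {t. \<alpha> \<le> cdf D t} = q" by (simp add: q_def S_def)
  ultimately show ?thesis
    unfolding is_quantile_def left_lim_cdf[OF D] by simp
qed

lemma cdf_gap_at_unique_quantile:
  assumes D: "real_distribution D" and "0 < \<alpha>" "\<alpha> < 1"
    and q: "is_quantile (cdf D) \<alpha> q" and unique: "\<And>q'. is_quantile (cdf D) \<alpha> q' \<Longrightarrow> q' = q"
    and "x > 0"
  shows "cdf D (q - x) < \<alpha> \<and> \<alpha> < cdf D (q + x)"
proof
  interpret real_distribution D by fact
  have "q = Inf {t. \<alpha> \<le> cdf D t}"
    using unique[OF is_quantile_cdf_Inf[OF assms(1-3)]] by simp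
  show "cdf D (q - x) < \<alpha>"
  proof (rule ccontr)
    assume "\<not> cdf D (q - x) < \<alpha>"
    then have "Inf {t. \<alpha> \<le> cdf D t} \<le> q - x"
      by (intro cInf_lower[OF _ bdd_below_cdf_ge[OF D \<open>0 < \<alpha>\<close>]]) simp
    with \<open>q = Inf {t. \<alpha> \<le> cdf D t}\<close> \<open>x > 0\<close> show False by simp
  qed
  show "\<alpha> < cdf D (q + x)"
  proof (rule ccontr)
    assume "\<not> \<alpha> < cdf D (q + x)"
    moreover have "\<alpha> \<le> cdf D (q + x)"
      using q cdf_nondecreasing[of q "q + x"] \<open>x > 0\<close> by (simp add: is_quantile_def)
    moreover have "measure D {..<q + x} \<le> cdf D (q + x)"
      unfolding cdf_def by (intro finite_measure_mono) auto
    ultimately have "is_quantile (cdf D) \<alpha> (q + x)"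
      by (simp add: is_quantile_def left_lim_cdf[OF D])
    then have "q + x = q" by (rule unique)
    with \<open>x > 0\<close> show False by simp
  qed
qed

theorem mainTheorem9:
  fixes M :: "'a measure" and X :: "nat \<Rightarrow> 'a \<Rightarrow> real"
    and F :: "real \<Rightarrow> real" and \<alpha> q\<^sub>\<alpha> :: real and n :: nat
  assumes "prob_space M"
    and "\<alpha> \<in> {0<..<1}"
    and "\<And>i. X i \<in> borel_measurable M"
    and "prob_space.indep_vars M (\<lambda>_. borel) X UNIV"
    and "\<And>i t. F t = measure M {\<omega> \<in> space M. X i \<omega> \<le> t}"
    and "is_quantile F \<alpha> q\<^sub>\<alpha>"
    and "\<And>q. is_quantile F \<alpha> q \<Longrightarrow> q = q\<^sub>\<alpha>"
    and "n \<ge> 1"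
  defines "d \<equiv> (\<lambda>x. min (F (q\<^sub>\<alpha> + x) - \<alpha>) (\<alpha> - F (q\<^sub>\<alpha> - x)))"
  shows "(\<forall>x>0. d x > 0) \<and>
    (\<forall>x>0. measure M {\<omega> \<in> space M.
        (SUP k\<in>{n..}. ereal \<bar>emp_quantile X k \<alpha> \<omega> - q\<^sub>\<alpha>\<bar>) > ereal x}
      \<le> 2 * exp (- 2 * real n * (d x)\<^sup>2))"
proof -
  interpret prob_space M by fact
  have F: "F = cdf (distr M borel (X 0))"
  proof
    show "F t = cdf (distr M borel (X 0)) t" for t
      using assms(5)[where i=0 and t=t] cdf_distr_eq[OF assms(3)[of 0], of t] by simp
  qed
  have D: "real_distribution (distr M borel (X 0))"
    by (rule real_distribution_distr) (rule assms(3))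
  have d_pos: "d x > 0" if "x > 0" for x
  proof -
    have "F (q\<^sub>\<alpha> - x) < \<alpha> \<and> \<alpha> < F (q\<^sub>\<alpha> + x)"
      unfolding F using assms(2) by (intro cdf_gap_at_unique_quantile[OF D] assms(6,7)[unfolded F] that) auto
    then show ?thesis by (simp add: d_def)
  qed
  moreover have "measure M {\<omega> \<in> space M.
        (SUP k\<in>{n..}. ereal \<bar>emp_quantile X k \<alpha> \<omega> - q\<^sub>\<alpha>\<bar>) > ereal x}
      \<le> 2 * exp (- 2 * real n * (d x)\<^sup>2)" if "x > 0" for x
    using assms(2) d_pos[OF that]
    by (intro prob_sup_emp_quantile_deviation[OF assms(4) assms(5)[symmetric] assms(8)]) (auto simp: d_def)
  ultimately show ?thesis by blast
qed

end
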